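(* Let $q$ be a prime power and $T\in\mathbb F_q[X,Y,Z]$ a reduced polynomial satisfying Property (e): for all $a,b,c,d\in\mathbb F_q$ with $a\neq c$ there is a unique pair $(y,z)\in\mathbb F_q^2$ with $T(a,y,z)=b$ and $T(c,y,z)=d$. Let $\{1,\beta\}$ be a basis of $\mathbb F_{q^2}$ over $\mathbb F_q$, and for $a,b\in\mathbb F_q$ let $S_{a,b}\in\mathbb F_{q^2}[X]$ be the polynomial of least degree inducing the map $\mathbb F_{q^2}\to\mathbb F_{q^2}$, $y+\beta z\mapsto T(a,y,z)+\beta T(b,y,z)$ ($y,z\in\mathbb F_q$). Then $S_{a,b}$ is a permutation polynomial over $\mathbb F_{q^2}$ whenever $a\neq b$.
   Context: A polynomial is reduced if its degree in each variable is less than $q$. A permutation polynomial over $\mathbb F_{q^2}$ is one inducing a bijection of $\mathbb F_{q^2}$. *)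

theory Defs
  imports "HOL-Computational_Algebra.Computational_Algebra"
begin

text \<open>The ambient finite field 'b plays the role of F_{q^2}; F_q is realised as
  its unique subfield of order q, namely the set of roots of x^q - x.\<close>
definition subfield_q :: "nat \<Rightarrow> ('b::field) set" where
  "subfield_q q = {x. x ^ q = x}"

text \<open>A reduced polynomial in F_q[X,Y,Z] given by its coefficients:
  coefficient of X^i Y^j Z^k is Tc i j k; all coefficients lie in F_q and vanish
  unless i, j, k < q.\<close>
definition reduced_poly3 :: "nat \<Rightarrow> (nat \<Rightarrow> nat \<Rightarrow> nat \<Rightarrow> 'b::field) \<Rightarrow> bool" where
  "reduced_poly3 q Tc \<longleftrightarrow>
     (\<forall>i j k. Tc i j k \<in> subfield_q q) \<and>
     (\<forall>i j k. \<not> (i < q \<and> j < q \<and> k < q) \<longrightarrow> Tc i j k = 0)"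

definition eval3 :: "nat \<Rightarrow> (nat \<Rightarrow> nat \<Rightarrow> nat \<Rightarrow> 'b::field) \<Rightarrow> 'b \<Rightarrow> 'b \<Rightarrow> 'b \<Rightarrow> 'b" where
  "eval3 q Tc x y z = (\<Sum>i<q. \<Sum>j<q. \<Sum>k<q. Tc i j k * x ^ i * y ^ j * z ^ k)"

definition property_e :: "nat \<Rightarrow> (nat \<Rightarrow> nat \<Rightarrow> nat \<Rightarrow> 'b::field) \<Rightarrow> bool" where
  "property_e q Tc \<longleftrightarrow>
     (\<forall>a\<in>subfield_q q. \<forall>b\<in>subfield_q q. \<forall>c\<in>subfield_q q. \<forall>d\<in>subfield_q q. a \<noteq> c \<longrightarrow>
        (\<exists>!p. p \<in> subfield_q q \<times> subfield_q q \<and>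
              eval3 q Tc a (fst p) (snd p) = b \<and> eval3 q Tc c (fst p) (snd p) = d))"

definition is_basis_1_beta :: "nat \<Rightarrow> 'b::field \<Rightarrow> bool" where
  "is_basis_1_beta q \<beta> \<longleftrightarrow>
     (\<forall>w. \<exists>!p. p \<in> subfield_q q \<times> subfield_q q \<and> w = fst p + \<beta> * snd p)"

definition induces_S :: "nat \<Rightarrow> (nat \<Rightarrow> nat \<Rightarrow> nat \<Rightarrow> 'b::field) \<Rightarrow> 'b \<Rightarrow> 'b \<Rightarrow> 'b \<Rightarrow> 'b poly \<Rightarrow> bool" where
  "induces_S q Tc \<beta> a b S \<longleftrightarrow>
     (\<forall>y\<in>subfield_q q. \<forall>z\<in>subfield_q q.
        poly S (y + \<beta> * z) = eval3 q Tc a y z + \<beta> * eval3 q Tc b y z)"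

definition is_S_ab :: "nat \<Rightarrow> (nat \<Rightarrow> nat \<Rightarrow> nat \<Rightarrow> 'b::field) \<Rightarrow> 'b \<Rightarrow> 'b \<Rightarrow> 'b \<Rightarrow> 'b poly \<Rightarrow> bool" where
  "is_S_ab q Tc \<beta> a b S \<longleftrightarrow>
     induces_S q Tc \<beta> a b S \<and> (\<forall>S'. induces_S q Tc \<beta> a b S' \<longrightarrow> degree S \<le> degree S')"

definition permutation_poly :: "'b::field poly \<Rightarrow> bool" where
  "permutation_poly S \<longleftrightarrow> bij (poly S)"

end

theory Submission
  imports Defs
begin

text \<open>Write \<open>w = u + \<beta> v\<close> with \<open>u, v \<in> F_q\<close>. Property (e) applied to \<open>a \<noteq> b\<close> and the targets
  \<open>u, v\<close> yields \<open>y, z \<in> F_q\<close> with \<open>T(a,y,z) = u\<close> and \<open>T(b,y,z) = v\<close>, so \<open>S(y + \<beta> z) = w\<close>.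
  Hence \<open>S\<close> is onto, and a surjective self-map of a finite field is a bijection.\<close>

lemma property_e_solvable:
  assumes "property_e q Tc"
    and "a \<in> subfield_q q" "b \<in> subfield_q q" "a \<noteq> b"
    and "u \<in> subfield_q q" "v \<in> subfield_q q"
  obtains y z where "y \<in> subfield_q q" "z \<in> subfield_q q"
    "eval3 q Tc a y z = u" "eval3 q Tc b y z = v"
proof -
  have "\<exists>!p. p \<in> subfield_q q \<times> subfield_q q \<and>
      eval3 q Tc a (fst p) (snd p) = u \<and> eval3 q Tc b (fst p) (snd p) = v"
    using assms unfolding property_e_def by blast
  then obtain p where "p \<in> subfield_q q \<times> subfield_q q"
      "eval3 q Tc a (fst p) (snd p) = u" "eval3 q Tc b (fst p) (snd p) = v"
    by blast
  then show ?thesis using that by (cases p) auto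
qed

lemma induces_S_surj:
  assumes "property_e q Tc" and "is_basis_1_beta q \<beta>"
    and "a \<in> subfield_q q" "b \<in> subfield_q q" "a \<noteq> b"
    and "induces_S q Tc \<beta> a b S"
  shows "surj (poly S)"
proof -
  have "w \<in> range (poly S)" for w
  proof -
    obtain p where "p \<in> subfield_q q \<times> subfield_q q" "w = fst p + \<beta> * snd p"
      using \<open>is_basis_1_beta q \<beta>\<close> unfolding is_basis_1_beta_def by blast
    then obtain u v where uv: "u \<in> subfield_q q" "v \<in> subfield_q q" "w = u + \<beta> * v"
      by (cases p) auto
    obtain y z where yz: "y \<in> subfield_q q" "z \<in> subfield_q q"
      "eval3 q Tc a y z = u" "eval3 q Tc b y z = v"
      using property_e_solvable assms(1,3-5) uv(1,2) by blast
    have "poly S (y + \<beta> * z) = w"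
      using \<open>induces_S q Tc \<beta> a b S\<close> yz uv(3) unfolding induces_S_def by simp
    then show ?thesis by (metis rangeI)
  qed
  then show ?thesis by blast
qed

theorem lemma4p6:
  fixes q :: nat and Tc :: "nat \<Rightarrow> nat \<Rightarrow> nat \<Rightarrow> 'b::{field,finite}"
    and \<beta> a b :: 'b and S :: "'b poly"
  assumes "\<exists>p k. prime p \<and> k > 0 \<and> q = p ^ k"
    and "card (UNIV :: 'b set) = q ^ 2"
    and "reduced_poly3 q Tc"
    and "property_e q Tc"
    and "is_basis_1_beta q \<beta>"
    and "a \<in> subfield_q q" and "b \<in> subfield_q q"
    and "is_S_ab q Tc \<beta> a b S"
    and "a \<noteq> b"
  shows "permutation_poly S"
proof -
  have "induces_S q Tc \<beta> a b S" using assms(8) unfolding is_S_ab_def by blast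
  then have "surj (poly S)" using induces_S_surj assms(4-7,9) by blast
  then show ?thesis unfolding permutation_poly_def by (simp add: bij_def finite_UNIV_surj_inj)
qed

end
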